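(* Let $\mathfrak g$ be a pre-Lie algebra, $r\in\mathrm{Sym}^2(\mathfrak g)$ an $\mathfrak s$-matrix, and $r^1_t=r+t\kappa_1$, $r^2_t=r+t\kappa_2$ one-parameter infinitesimal deformations of $r$. For $i=1,2$ let $\pi_i(\alpha,\beta)=\mathrm{ad}^*_{\kappa_i^\sharp(\alpha)}\beta-R^*_{\kappa_i^\sharp(\beta)}\alpha$ be the corresponding one-parameter infinitesimal deformations of the phase space $(\mathfrak g^c,\mathfrak g^{*c},\omega_p)$ associated to $r$. If $r^1_t$ and $r^2_t$ are equivalent, then the phase-space deformations generated by $\pi_1$ and $\pi_2$ are equivalent.
   Context: A pre-Lie algebra is a finite-dimensional vector space over a field $\mathbb K$ of characteristic $0$ with product $\cdot$ satisfying $(x\cdot y)\cdot z-x\cdot(y\cdot z)=(y\cdot x)\cdot z-y\cdot(x\cdot z)$; $\mathfrak g^c$ is $\mathfrak g$ with the commutator bracket $[x,y]_{\mathfrak g}$. $L_xy=x\cdot y$, $R_xy=y\cdot x$, $\mathrm{ad}_xy=[x,y]_{\mathfrak g}$, $\langle L^*_x\alpha,y\rangle=-\langle\alpha,x\cdot y\rangle$, $\langle R^*_x\alpha,y\rangle=-\langle\alpha,y\cdot x\rangle$, $\mathrm{ad}^*_x=L^*_x-R^*_x$. For $r\in\mathrm{Sym}^2(\mathfrak g)$, $\langle r^\sharp(\alpha),\beta\rangle=r(\alpha,\beta)$; for $r=\sum_ia_i\otimes b_i$, $[r,r]=-\sum a_i\cdot a_j\otimes b_i\otimes b_j+\sum a_i\otimes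 b_i\cdot a_j\otimes b_j+\sum a_i\otimes a_j\otimes[b_i,b_j]_{\mathfrak g}$; $r$ is an $\mathfrak s$-matrix if $[r,r]=0$; $\alpha\cdot_r\beta=\mathrm{ad}^*_{r^\sharp(\alpha)}\beta-R^*_{r^\sharp(\beta)}\alpha$. A one-parameter infinitesimal deformation of $r$ is $r+t\kappa$, $\kappa\in\mathrm{Sym}^2(\mathfrak g)$, an $\mathfrak s$-matrix for all $t\in\mathbb K$. $\tilde{\mathcal C}^1_{\mathfrak s}(\mathfrak g)=\{x\in\mathfrak g:(R_x\otimes\mathrm{Id}+\mathrm{Id}\otimes R_x)r=0\}$. A weak homomorphism from $\mathfrak s$-matrix $r_2$ to $r_1$ is a pair $(\phi,\varphi)$, $\phi:\mathfrak g^c\to\mathfrak g^c$ a Lie algebra homomorphism, $\varphi$ linear, with $(\varphi\otimes\mathrm{Id})r_1=(\mathrm{Id}\otimes\phi)r_2$ and $\varphi(\phi(x)\cdot y)=x\cdot\varphi(y)$. Deformations $r^1_t,r^2_t$ are equivalent if there is $x\in\tilde{\mathcal C}^1_{\mathfrak s}(\mathfrak g)$ with $(\mathrm{Id}+t\,\mathrm{ad}_x,\mathrm{Id}-tL_x)$ a weak homomorphism from $r^2_t$ to $r^1_t$ for every $t$. For a pre-Lie product $\ast$ on $\mathfrak g^*$ let $[x+\alpha,y+\beta]_{p,\ast}=(\alpha\ast\beta-\beta\ast\alpha)+L^*_x\beta-L^*_y\alpha+L^*_\alpha y-L^*_\beta x+[x,y]_{\mathfrak g}$ on $\mathfrak g\oplus\mathfrak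 g^*$, where $\langle L^*_\alpha x,\beta\rangle=-\langle x,\alpha\ast\beta\rangle$; this is a phase space of $\mathfrak g^c$ if it is a Lie bracket and $\omega_p(x+\alpha,y+\beta)=\langle\alpha,y\rangle-\langle x,\beta\rangle$ is a $2$-cocycle. $\pi$ generates a one-parameter infinitesimal deformation of the phase space associated to $r$ if for all $t$, $\ast_t=\cdot_r+t\pi$ is a pre-Lie product giving a phase space. A weak homomorphism from the phase space defined by $\ast$ to the one defined by $\ast'$ is a pair $(\phi,\varphi)$ with $\phi:\mathfrak g^c\to\mathfrak g^c$ a Lie algebra homomorphism and $\varphi:\mathfrak g\to\mathfrak g$ linear such that $\varphi^*$ is a Lie algebra homomorphism from $(\mathfrak g^*,[\cdot,\cdot]_\ast)$ to $(\mathfrak g^*,[\cdot,\cdot]_{\ast'})$ and $\phi+\varphi^*$ is a Lie algebra homomorphism from $(\mathfrak g\oplus\mathfrak g^*,[\cdot,\cdot]_{p,\ast})$ to $(\mathfrak g\oplus\mathfrak g^*,[\cdot,\cdot]_{p,\ast'})$. Two phase-space deformations generated by $\pi_1,\pi_2$ are equivalent if there is $x\in\mathfrak g$ such that for all $t$, $(\mathrm{Id}+t\,\mathrm{ad}_x,\mathrm{Id}-tL_x)$ is a weak homomorphism from the phase space defined by $\cdot_r+t\pi_2$ to that defined by $\cdot_r+t\pi_1$. *)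

theory Defs
  imports Main
begin

text \<open>Coordinates: the finite-dimensional space g over a field 'k of characteristic 0
is K^n, represented as functions 'n \<Rightarrow> 'k for a finite index type 'n
(a fixed basis ebas j).  The dual g* is represented by the same type via the dual
basis, with pairing  pair alpha x.  Tensors in g (x) g are 'n \<Rightarrow> 'n \<Rightarrow> 'k (coefficients in
the basis ebas p (x) ebas q), tensors in g (x) g (x) g are 'n \<Rightarrow> 'n \<Rightarrow> 'n \<Rightarrow> 'k.
The pre-Lie product is given by structure constants c i j k : ebas i . ebas j = sum_k c i j k ebas k.\<close>

type_synonym ('k, 'n) vec = "'n \<Rightarrow> 'k"

definition vadd :: "('k::field, 'n) vec \<Rightarrow> ('k, 'n) vec \<Rightarrow> ('k, 'n) vec" where
  "vadd x y = (\<lambda>i. x i + y i)"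
definition vsub :: "('k::field, 'n) vec \<Rightarrow> ('k, 'n) vec \<Rightarrow> ('k, 'n) vec" where
  "vsub x y = (\<lambda>i. x i - y i)"
definition vsc :: "'k::field \<Rightarrow> ('k, 'n) vec \<Rightarrow> ('k, 'n) vec" where
  "vsc a x = (\<lambda>i. a * x i)"

definition ebas :: "'n \<Rightarrow> ('k::field, 'n) vec" where
  "ebas j = (\<lambda>i. if i = j then 1 else 0)"

definition pair :: "('k::field, 'n::finite) vec \<Rightarrow> ('k, 'n) vec \<Rightarrow> 'k" where
  "pair \<alpha> x = (\<Sum>i\<in>UNIV. \<alpha> i * x i)"

definition pmul :: "('n::finite \<Rightarrow> 'n \<Rightarrow> 'n \<Rightarrow> 'k::field) \<Rightarrow> ('k, 'n) vec \<Rightarrow> ('k, 'n) vec \<Rightarrow> ('k, 'n) vec" where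
  "pmul c x y = (\<lambda>k. \<Sum>i\<in>UNIV. \<Sum>j\<in>UNIV. x i * y j * c i j k)"

definition is_prelie :: "(('k::field, 'n) vec \<Rightarrow> ('k, 'n) vec \<Rightarrow> ('k, 'n) vec) \<Rightarrow> bool" where
  "is_prelie m \<longleftrightarrow> (\<forall>x y z.
     vsub (m (m x y) z) (m x (m y z)) = vsub (m (m y x) z) (m y (m x z)))"

definition prelie_alg :: "('n::finite \<Rightarrow> 'n \<Rightarrow> 'n \<Rightarrow> 'k::field) \<Rightarrow> bool" where
  "prelie_alg c \<longleftrightarrow> is_prelie (pmul c)"

definition comm :: "(('k::field, 'n) vec \<Rightarrow> ('k, 'n) vec \<Rightarrow> ('k, 'n) vec) \<Rightarrow> ('k, 'n) vec \<Rightarrow> ('k, 'n) vec \<Rightarrow> ('k, 'n) vec" where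
  "comm m x y = vsub (m x y) (m y x)"

definition ad :: "('n::finite \<Rightarrow> 'n \<Rightarrow> 'n \<Rightarrow> 'k::field) \<Rightarrow> ('k, 'n) vec \<Rightarrow> ('k, 'n) vec \<Rightarrow> ('k, 'n) vec" where
  "ad c x y = comm (pmul c) x y"

definition Lstar :: "('n::finite \<Rightarrow> 'n \<Rightarrow> 'n \<Rightarrow> 'k::field) \<Rightarrow> ('k, 'n) vec \<Rightarrow> ('k, 'n) vec \<Rightarrow> ('k, 'n) vec" where
  "Lstar c x \<alpha> = (\<lambda>j. - pair \<alpha> (pmul c x (ebas j)))"
definition Rstar :: "('n::finite \<Rightarrow> 'n \<Rightarrow> 'n \<Rightarrow> 'k::field) \<Rightarrow> ('k, 'n) vec \<Rightarrow> ('k, 'n) vec \<Rightarrow> ('k, 'n) vec" where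
  "Rstar c x \<alpha> = (\<lambda>j. - pair \<alpha> (pmul c (ebas j) x))"
definition adstar :: "('n::finite \<Rightarrow> 'n \<Rightarrow> 'n \<Rightarrow> 'k::field) \<Rightarrow> ('k, 'n) vec \<Rightarrow> ('k, 'n) vec \<Rightarrow> ('k, 'n) vec" where
  "adstar c x \<alpha> = vsub (Lstar c x \<alpha>) (Rstar c x \<alpha>)"

definition symm :: "('n \<Rightarrow> 'n \<Rightarrow> 'k) \<Rightarrow> bool" where
  "symm r \<longleftrightarrow> (\<forall>i j. r i j = r j i)"

definition sharp :: "('n::finite \<Rightarrow> 'n \<Rightarrow> 'k::field) \<Rightarrow> ('k, 'n) vec \<Rightarrow> ('k, 'n) vec" where
  "sharp r \<alpha> = (\<lambda>j. \<Sum>i\<in>UNIV. r i j * \<alpha> i)"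

definition tensor2 :: "('k::field, 'n) vec \<Rightarrow> ('k, 'n) vec \<Rightarrow> 'n \<Rightarrow> 'n \<Rightarrow> 'k" where
  "tensor2 u v = (\<lambda>a b. u a * v b)"
definition tensor3 :: "('k::field, 'n) vec \<Rightarrow> ('k, 'n) vec \<Rightarrow> ('k, 'n) vec \<Rightarrow> 'n \<Rightarrow> 'n \<Rightarrow> 'n \<Rightarrow> 'k" where
  "tensor3 u v w = (\<lambda>a b d. u a * v b * w d)"

text \<open>[r,r] for r = sum_{p,q} r p q (ebas p) (x) (ebas q), i.e. a_i = r p q ebas p, b_i = ebas q\<close>
definition rr :: "('n::finite \<Rightarrow> 'n \<Rightarrow> 'n \<Rightarrow> 'k::field) \<Rightarrow> ('n \<Rightarrow> 'n \<Rightarrow> 'k) \<Rightarrow> 'n \<Rightarrow> 'n \<Rightarrow> 'n \<Rightarrow> 'k" where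
  "rr c r = (\<lambda>a b d. \<Sum>p\<in>UNIV. \<Sum>q\<in>UNIV. \<Sum>s\<in>UNIV. \<Sum>t\<in>UNIV. r p q * r s t *
     ( - tensor3 (pmul c (ebas p) (ebas s)) (ebas q) (ebas t) a b d
       + tensor3 (ebas p) (pmul c (ebas q) (ebas s)) (ebas t) a b d
       + tensor3 (ebas p) (ebas s) (ad c (ebas q) (ebas t)) a b d))"

definition is_smatrix :: "('n::finite \<Rightarrow> 'n \<Rightarrow> 'n \<Rightarrow> 'k::field) \<Rightarrow> ('n \<Rightarrow> 'n \<Rightarrow> 'k) \<Rightarrow> bool" where
  "is_smatrix c r \<longleftrightarrow> symm r \<and> rr c r = (\<lambda>a b d. 0)"

definition inf_def_s :: "('n::finite \<Rightarrow> 'n \<Rightarrow> 'n \<Rightarrow> 'k::field) \<Rightarrow> ('n \<Rightarrow> 'n \<Rightarrow> 'k) \<Rightarrow> ('n \<Rightarrow> 'n \<Rightarrow> 'k) \<Rightarrow> bool" where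
  "inf_def_s c r \<kappa> \<longleftrightarrow> symm \<kappa> \<and> (\<forall>t. is_smatrix c (\<lambda>i j. r i j + t * \<kappa> i j))"

definition tmap :: "(('k::field, 'n::finite) vec \<Rightarrow> ('k, 'n) vec) \<Rightarrow> (('k, 'n) vec \<Rightarrow> ('k, 'n) vec) \<Rightarrow> ('n \<Rightarrow> 'n \<Rightarrow> 'k) \<Rightarrow> 'n \<Rightarrow> 'n \<Rightarrow> 'k" where
  "tmap f g T = (\<lambda>a b. \<Sum>p\<in>UNIV. \<Sum>q\<in>UNIV. T p q * tensor2 (f (ebas p)) (g (ebas q)) a b)"

definition C1 :: "('n::finite \<Rightarrow> 'n \<Rightarrow> 'n \<Rightarrow> 'k::field) \<Rightarrow> ('n \<Rightarrow> 'n \<Rightarrow> 'k) \<Rightarrow> ('k, 'n) vec set" where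
  "C1 c r = {x. (\<lambda>a b. tmap (\<lambda>y. pmul c y x) id r a b + tmap id (\<lambda>y. pmul c y x) r a b) = (\<lambda>a b. 0)}"

definition lin :: "(('k::field, 'n) vec \<Rightarrow> ('k, 'm) vec) \<Rightarrow> bool" where
  "lin f \<longleftrightarrow> (\<forall>x y. f (vadd x y) = vadd (f x) (f y)) \<and> (\<forall>a x. f (vsc a x) = vsc a (f x))"

definition lie_hom_c :: "('n::finite \<Rightarrow> 'n \<Rightarrow> 'n \<Rightarrow> 'k::field) \<Rightarrow> (('k, 'n) vec \<Rightarrow> ('k, 'n) vec) \<Rightarrow> bool" where
  "lie_hom_c c \<phi> \<longleftrightarrow> lin \<phi> \<and> (\<forall>x y. \<phi> (ad c x y) = ad c (\<phi> x) (\<phi> y))"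

definition weak_hom_s :: "('n::finite \<Rightarrow> 'n \<Rightarrow> 'n \<Rightarrow> 'k::field) \<Rightarrow> (('k, 'n) vec \<Rightarrow> ('k, 'n) vec) \<Rightarrow> (('k, 'n) vec \<Rightarrow> ('k, 'n) vec)
     \<Rightarrow> ('n \<Rightarrow> 'n \<Rightarrow> 'k) \<Rightarrow> ('n \<Rightarrow> 'n \<Rightarrow> 'k) \<Rightarrow> bool" where
  "weak_hom_s c \<phi> \<psi> r2 r1 \<longleftrightarrow> lie_hom_c c \<phi> \<and> lin \<psi> \<and> tmap \<psi> id r1 = tmap id \<phi> r2
     \<and> (\<forall>x y. \<psi> (pmul c (\<phi> x) y) = pmul c x (\<psi> y))"

definition equiv_s :: "('n::finite \<Rightarrow> 'n \<Rightarrow> 'n \<Rightarrow> 'k::field) \<Rightarrow> ('n \<Rightarrow> 'n \<Rightarrow> 'k) \<Rightarrow> ('n \<Rightarrow> 'n \<Rightarrow> 'k) \<Rightarrow> ('n \<Rightarrow> 'n \<Rightarrow> 'k) \<Rightarrow> bool" where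
  "equiv_s c r \<kappa>1 \<kappa>2 \<longleftrightarrow> (\<exists>x\<in>C1 c r. \<forall>t.
     weak_hom_s c (\<lambda>y. vadd y (vsc t (ad c x y))) (\<lambda>y. vsub y (vsc t (pmul c x y)))
       (\<lambda>i j. r i j + t * \<kappa>2 i j) (\<lambda>i j. r i j + t * \<kappa>1 i j))"

definition rdot :: "('n::finite \<Rightarrow> 'n \<Rightarrow> 'n \<Rightarrow> 'k::field) \<Rightarrow> ('n \<Rightarrow> 'n \<Rightarrow> 'k) \<Rightarrow> ('k, 'n) vec \<Rightarrow> ('k, 'n) vec \<Rightarrow> ('k, 'n) vec" where
  "rdot c r \<alpha> \<beta> = vsub (adstar c (sharp r \<alpha>) \<beta>) (Rstar c (sharp r \<beta>) \<alpha>)"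

definition LstarD :: "(('k::field, 'n::finite) vec \<Rightarrow> ('k, 'n) vec \<Rightarrow> ('k, 'n) vec) \<Rightarrow> ('k, 'n) vec \<Rightarrow> ('k, 'n) vec \<Rightarrow> ('k, 'n) vec" where
  "LstarD m \<alpha> x = (\<lambda>j. - pair (m \<alpha> (ebas j)) x)"

type_synonym ('k, 'n) pvec = "('k, 'n) vec \<times> ('k, 'n) vec"

definition padd :: "('k::field, 'n) pvec \<Rightarrow> ('k, 'n) pvec \<Rightarrow> ('k, 'n) pvec" where
  "padd X Y = (vadd (fst X) (fst Y), vadd (snd X) (snd Y))"
definition psc :: "'k::field \<Rightarrow> ('k, 'n) pvec \<Rightarrow> ('k, 'n) pvec" where
  "psc a X = (vsc a (fst X), vsc a (snd X))"
definition pzero :: "('k::field, 'n) pvec" where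
  "pzero = ((\<lambda>i. 0), (\<lambda>i. 0))"

text \<open>[x+alpha, y+beta]_{p,*}: first component in g, second in g*\<close>
definition pbr :: "('n::finite \<Rightarrow> 'n \<Rightarrow> 'n \<Rightarrow> 'k::field) \<Rightarrow> (('k, 'n) vec \<Rightarrow> ('k, 'n) vec \<Rightarrow> ('k, 'n) vec)
     \<Rightarrow> ('k, 'n) pvec \<Rightarrow> ('k, 'n) pvec \<Rightarrow> ('k, 'n) pvec" where
  "pbr c m X Y =
     (vadd (vsub (LstarD m (snd X) (fst Y)) (LstarD m (snd Y) (fst X))) (ad c (fst X) (fst Y)),
      vadd (comm m (snd X) (snd Y)) (vsub (Lstar c (fst X) (snd Y)) (Lstar c (fst Y) (snd X))))"

definition plin :: "(('k::field, 'n) pvec \<Rightarrow> ('k, 'n) pvec) \<Rightarrow> bool" where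
  "plin f \<longleftrightarrow> (\<forall>X Y. f (padd X Y) = padd (f X) (f Y)) \<and> (\<forall>a X. f (psc a X) = psc a (f X))"

definition is_lie_br :: "(('k::field, 'n) pvec \<Rightarrow> ('k, 'n) pvec \<Rightarrow> ('k, 'n) pvec) \<Rightarrow> bool" where
  "is_lie_br B \<longleftrightarrow> (\<forall>X. plin (B X)) \<and> (\<forall>Y. plin (\<lambda>X. B X Y)) \<and> (\<forall>X. B X X = pzero)
     \<and> (\<forall>X Y Z. padd (padd (B X (B Y Z)) (B Y (B Z X))) (B Z (B X Y)) = pzero)"

definition omega_p :: "('k::field, 'n::finite) pvec \<Rightarrow> ('k, 'n) pvec \<Rightarrow> 'k" where
  "omega_p X Y = pair (snd X) (fst Y) - pair (fst X) (snd Y)"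

definition is_phase_space :: "('n::finite \<Rightarrow> 'n \<Rightarrow> 'n \<Rightarrow> 'k::field) \<Rightarrow> (('k, 'n) vec \<Rightarrow> ('k, 'n) vec \<Rightarrow> ('k, 'n) vec) \<Rightarrow> bool" where
  "is_phase_space c m \<longleftrightarrow> is_lie_br (pbr c m) \<and>
     (\<forall>X Y Z. omega_p (pbr c m X Y) Z + omega_p (pbr c m Y Z) X + omega_p (pbr c m Z X) Y = 0)"

definition dualmap :: "(('k::field, 'n::finite) vec \<Rightarrow> ('k, 'n) vec) \<Rightarrow> ('k, 'n) vec \<Rightarrow> ('k, 'n) vec" where
  "dualmap f \<alpha> = (\<lambda>j. pair \<alpha> (f (ebas j)))"

definition weak_hom_p :: "('n::finite \<Rightarrow> 'n \<Rightarrow> 'n \<Rightarrow> 'k::field) \<Rightarrow> (('k, 'n) vec \<Rightarrow> ('k, 'n) vec) \<Rightarrow> (('k, 'n) vec \<Rightarrow> ('k, 'n) vec)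
     \<Rightarrow> (('k, 'n) vec \<Rightarrow> ('k, 'n) vec \<Rightarrow> ('k, 'n) vec) \<Rightarrow> (('k, 'n) vec \<Rightarrow> ('k, 'n) vec \<Rightarrow> ('k, 'n) vec) \<Rightarrow> bool" where
  "weak_hom_p c \<phi> \<psi> m m' \<longleftrightarrow> lie_hom_c c \<phi> \<and> lin \<psi>
     \<and> lin (dualmap \<psi>) \<and> (\<forall>\<alpha> \<beta>. dualmap \<psi> (comm m \<alpha> \<beta>) = comm m' (dualmap \<psi> \<alpha>) (dualmap \<psi> \<beta>))
     \<and> plin (\<lambda>X. (\<phi> (fst X), dualmap \<psi> (snd X)))
     \<and> (\<forall>X Y. (\<lambda>X. (\<phi> (fst X), dualmap \<psi> (snd X))) (pbr c m X Y)
              = pbr c m' (\<phi> (fst X), dualmap \<psi> (snd X)) (\<phi> (fst Y), dualmap \<psi> (snd Y)))"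

definition equiv_p :: "('n::finite \<Rightarrow> 'n \<Rightarrow> 'n \<Rightarrow> 'k::field) \<Rightarrow> ('n \<Rightarrow> 'n \<Rightarrow> 'k)
     \<Rightarrow> (('k, 'n) vec \<Rightarrow> ('k, 'n) vec \<Rightarrow> ('k, 'n) vec) \<Rightarrow> (('k, 'n) vec \<Rightarrow> ('k, 'n) vec \<Rightarrow> ('k, 'n) vec) \<Rightarrow> bool" where
  "equiv_p c r \<pi>1 \<pi>2 \<longleftrightarrow> (\<exists>x. \<forall>t.
     weak_hom_p c (\<lambda>y. vadd y (vsc t (ad c x y))) (\<lambda>y. vsub y (vsc t (pmul c x y)))
       (\<lambda>\<alpha> \<beta>. vadd (rdot c r \<alpha> \<beta>) (vsc t (\<pi>2 \<alpha> \<beta>)))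
       (\<lambda>\<alpha> \<beta>. vadd (rdot c r \<alpha> \<beta>) (vsc t (\<pi>1 \<alpha> \<beta>))))"

end

theory Submission
  imports Defs
begin

text \<open>For each t, the equivalence of r + t \<kappa>1 and r + t \<kappa>2 is a weak homomorphism (\<phi>, \<psi>)
  between symmetric tensors r2 and r1. Such a pair intertwines the sharp maps in both directions,
  r1# \<circ> \<psi>* = \<phi> \<circ> r2# and \<psi> \<circ> r1# = r2# \<circ> \<phi>*, and together with the compatibility
  \<psi>(\<phi>(x) y) = x \<psi>(y) this makes \<psi>* and \<phi> + \<psi>* transport the product of r2 on the dual and
  its phase-space bracket to those of r1. Since the product of r + t \<kappa> is the product of r
  plus t \<pi>, this is the required weak homomorphism of phase spaces for every t.\<close>

lemma pair_commute: "pair a x = pair x a"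
  unfolding pair_def by (simp add: mult.commute)

lemma pair_ebas_right [simp]: "pair a (ebas j) = a j"
  unfolding pair_def ebas_def by (simp add: if_distrib cong: if_cong)

lemma pair_vadd_left [simp]: "pair (vadd a b) x = pair a x + pair b x"
  unfolding pair_def vadd_def by (simp add: algebra_simps sum.distrib)

lemma pair_vadd_right [simp]: "pair x (vadd a b) = pair x a + pair x b"
  unfolding pair_def vadd_def by (simp add: algebra_simps sum.distrib)

lemma pair_vsub_left [simp]: "pair (vsub a b) x = pair a x - pair b x"
  unfolding pair_def vsub_def by (simp add: algebra_simps sum_subtractf)

lemma pair_vsub_right [simp]: "pair x (vsub a b) = pair x a - pair x b"
  unfolding pair_def vsub_def by (simp add: algebra_simps sum_subtractf)

lemma pair_vsc_left [simp]: "pair (vsc t a) x = t * pair a x"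
  unfolding pair_def vsc_def by (simp add: algebra_simps sum_distrib_left)

lemma pair_vsc_right [simp]: "pair x (vsc t a) = t * pair x a"
  unfolding pair_def vsc_def by (simp add: algebra_simps sum_distrib_left)

lemma pair_uminus_left: "pair (\<lambda>j. - v j) y = - pair v y"
  unfolding pair_def by (simp add: sum_negf)

lemma vec_eq_pairI: "(\<And>y::('k::field, 'n::finite) vec. pair v y = pair w y) \<Longrightarrow> v = w"
  by (rule ext) (metis pair_ebas_right)

lemma lin_vadd: "lin f \<Longrightarrow> f (vadd a b) = vadd (f a) (f b)"
  by (simp add: lin_def)

lemma lin_vsc: "lin f \<Longrightarrow> f (vsc t a) = vsc t (f a)"
  by (simp add: lin_def)

lemma lin_vsub:
  assumes "lin f"
  shows "f (vsub a b) = vsub (f a) (f b)"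
proof -
  have "vsub a b = vadd a (vsc (-1) b)" and "vsub (f a) (f b) = vadd (f a) (vsc (-1) (f b))"
    by (simp_all add: vsub_def vadd_def vsc_def)
  then show ?thesis
    using assms by (simp add: lin_vadd lin_vsc)
qed

lemma lin_eq_sum_ebas:
  fixes f :: "('k::field, 'n::finite) vec \<Rightarrow> ('k, 'm) vec"
  assumes "lin f"
  shows "f x = (\<lambda>k. \<Sum>p\<in>UNIV. x p * f (ebas p) k)"
proof -
  have zero: "f (\<lambda>i. 0) = (\<lambda>i. 0)"
    using lin_vsc[OF assms, of 0 x] by (simp add: vsc_def)
  have sum_ebas: "f (\<lambda>i. \<Sum>p\<in>S. x p * ebas p i) = (\<lambda>k. \<Sum>p\<in>S. x p * f (ebas p) k)"
    if "finite S" for S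
    using that
  proof (induction S rule: finite_induct)
    case empty
    then show ?case
      using zero by simp
  next
    case (insert a S)
    then have "(\<lambda>i. \<Sum>p\<in>insert a S. x p * ebas p i)
        = vadd (vsc (x a) (ebas a)) (\<lambda>i. \<Sum>p\<in>S. x p * ebas p i)"
      by (simp add: vadd_def vsc_def)
    then show ?case
      using insert lin_vadd[OF assms] lin_vsc[OF assms] by (simp add: vadd_def vsc_def)
  qed
  have "(\<lambda>i. \<Sum>p\<in>UNIV. x p * ebas p i) = x"
    by (simp add: ebas_def if_distrib cong: if_cong)
  then show ?thesis
    using sum_ebas[of UNIV] by simp
qed

lemma pair_dualmap:
  assumes "lin f"
  shows "pair (dualmap f \<alpha>) x = pair \<alpha> (f x)"
proof -
  have "pair (dualmap f \<alpha>) x = (\<Sum>j\<in>UNIV. \<Sum>i\<in>UNIV. \<alpha> i * f (ebas j) i * x j)"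
    unfolding pair_def dualmap_def by (simp add: sum_distrib_right)
  also have "\<dots> = (\<Sum>i\<in>UNIV. \<Sum>j\<in>UNIV. \<alpha> i * f (ebas j) i * x j)"
    by (rule sum.swap)
  also have "\<dots> = pair \<alpha> (\<lambda>k. \<Sum>p\<in>UNIV. x p * f (ebas p) k)"
    unfolding pair_def by (simp add: sum_distrib_left mult_ac)
  also have "\<dots> = pair \<alpha> (f x)"
    using lin_eq_sum_ebas[OF assms, of x] by simp
  finally show ?thesis .
qed

lemma lin_dualmap: "lin (dualmap f)"
  unfolding lin_def dualmap_def vadd_def vsc_def pair_def
  by (simp add: algebra_simps sum.distrib sum_distrib_left)

lemma dualmap_vadd: "dualmap f (vadd a b) = vadd (dualmap f a) (dualmap f b)"
  by (rule lin_vadd[OF lin_dualmap])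

lemma dualmap_vsub: "dualmap f (vsub a b) = vsub (dualmap f a) (dualmap f b)"
  by (rule lin_vsub[OF lin_dualmap])

lemma lin_pmul_right: "lin (pmul c x)"
  unfolding lin_def pmul_def vadd_def vsc_def
  by (simp add: algebra_simps sum.distrib sum_distrib_left)

lemma lin_pmul_left: "lin (\<lambda>y. pmul c y x)"
  unfolding lin_def pmul_def vadd_def vsc_def
  by (simp add: algebra_simps sum.distrib sum_distrib_left)

lemma ad_vadd_left: "ad c (vadd a b) y = vadd (ad c a y) (ad c b y)"
  unfolding ad_def comm_def pmul_def vadd_def vsub_def
  by (simp add: algebra_simps sum.distrib)

lemma ad_vsc_left: "ad c (vsc t a) y = vsc t (ad c a y)"
  unfolding ad_def comm_def pmul_def vsc_def vsub_def
  by (simp add: algebra_simps sum_distrib_left)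

lemma pair_Lstar [simp]: "pair (Lstar c x \<alpha>) y = - pair \<alpha> (pmul c x y)"
proof -
  have "Lstar c x \<alpha> = (\<lambda>j. - dualmap (pmul c x) \<alpha> j)"
    by (simp add: Lstar_def dualmap_def)
  then show ?thesis
    by (simp add: pair_uminus_left pair_dualmap[OF lin_pmul_right])
qed

lemma pair_Rstar [simp]: "pair (Rstar c x \<alpha>) y = - pair \<alpha> (pmul c y x)"
proof -
  have "Rstar c x \<alpha> = (\<lambda>j. - dualmap (\<lambda>y. pmul c y x) \<alpha> j)"
    by (simp add: Rstar_def dualmap_def)
  then show ?thesis
    by (simp add: pair_uminus_left pair_dualmap[OF lin_pmul_left])
qed

lemma pair_adstar [simp]: "pair (adstar c x \<alpha>) y = - pair \<alpha> (ad c x y)"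
  by (simp add: adstar_def ad_def comm_def)

lemma pair_LstarD:
  assumes "lin (m \<alpha>)"
  shows "pair \<gamma> (LstarD m \<alpha> x) = - pair (m \<alpha> \<gamma>) x"
proof -
  have "LstarD m \<alpha> x = (\<lambda>j. - dualmap (m \<alpha>) x j)"
    by (simp add: LstarD_def dualmap_def pair_commute)
  then show ?thesis
    by (metis pair_commute pair_uminus_left pair_dualmap[OF assms])
qed

lemma sharp_vadd: "sharp r (vadd a b) = vadd (sharp r a) (sharp r b)"
  unfolding sharp_def vadd_def by (simp add: algebra_simps sum.distrib)

lemma sharp_vsc: "sharp r (vsc t a) = vsc t (sharp r a)"
  unfolding sharp_def vsc_def by (simp add: algebra_simps sum_distrib_left)

lemma sharp_deform: "sharp (\<lambda>i j. r i j + t * k i j) a = vadd (sharp r a) (vsc t (sharp k a))"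
  unfolding sharp_def vadd_def vsc_def by (simp add: algebra_simps sum.distrib sum_distrib_left)

lemma pair_rdot:
  "pair (rdot c r \<alpha> \<beta>) y = - pair \<beta> (ad c (sharp r \<alpha>) y) + pair \<alpha> (pmul c y (sharp r \<beta>))"
  by (simp add: rdot_def)

lemma lin_rdot: "lin (rdot c r \<alpha>)"
  unfolding lin_def
  by (auto intro!: vec_eq_pairI simp: pair_rdot sharp_vadd sharp_vsc algebra_simps
      lin_vadd[OF lin_pmul_right] lin_vsc[OF lin_pmul_right])

lemma rdot_deform:
  "rdot c (\<lambda>i j. r i j + t * k i j) \<alpha> \<beta>
     = vadd (rdot c r \<alpha> \<beta>) (vsc t (vsub (adstar c (sharp k \<alpha>) \<beta>) (Rstar c (sharp k \<beta>) \<alpha>)))"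
  by (rule vec_eq_pairI)
    (simp add: pair_rdot sharp_deform ad_vadd_left ad_vsc_left algebra_simps
      lin_vadd[OF lin_pmul_right] lin_vsc[OF lin_pmul_right])

lemma comm_rdot: "comm (rdot c r) \<alpha> \<beta> = vsub (Lstar c (sharp r \<alpha>) \<beta>) (Lstar c (sharp r \<beta>) \<alpha>)"
  by (rule vec_eq_pairI) (simp add: comm_def pair_rdot ad_def algebra_simps)

lemma sum_mult_ebas: "(\<Sum>p\<in>UNIV. f p * (ebas p a * x)) = f a * x" for f :: "'n::finite \<Rightarrow> 'k::field"
proof -
  have "(\<Sum>p\<in>UNIV. f p * (ebas p a * x)) = (\<Sum>p\<in>UNIV. if p = a then f a * x else 0)"
    by (rule sum.cong) (auto simp: ebas_def)
  then show ?thesis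
    by simp
qed

lemma tmap_left_eq: "tmap f id T a b = (\<Sum>p\<in>UNIV. T p b * f (ebas p) a)"
  unfolding tmap_def tensor2_def ebas_def by (simp add: if_distrib cong: if_cong)

lemma tmap_right_eq: "tmap id g T a b = (\<Sum>q\<in>UNIV. T a q * g (ebas q) b)"
proof -
  have "tmap id g T a b = (\<Sum>p\<in>UNIV. \<Sum>q\<in>UNIV. T p q * (ebas p a * g (ebas q) b))"
    unfolding tmap_def tensor2_def by simp
  also have "\<dots> = (\<Sum>q\<in>UNIV. \<Sum>p\<in>UNIV. T p q * (ebas p a * g (ebas q) b))"
    by (rule sum.swap)
  finally show ?thesis
    by (simp only: sum_mult_ebas)
qed

lemma tmap_swap: "symm T \<Longrightarrow> tmap f id T a b = tmap id f T b a"
  unfolding tmap_left_eq tmap_right_eq symm_def by metis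

lemma contract_tmap_left: "(\<Sum>a\<in>UNIV. \<alpha> a * tmap f id T a b) = sharp T (dualmap f \<alpha>) b"
proof -
  have "(\<Sum>a\<in>UNIV. \<alpha> a * tmap f id T a b) = (\<Sum>a\<in>UNIV. \<Sum>p\<in>UNIV. \<alpha> a * (T p b * f (ebas p) a))"
    unfolding tmap_left_eq by (simp add: sum_distrib_left)
  also have "\<dots> = (\<Sum>p\<in>UNIV. \<Sum>a\<in>UNIV. \<alpha> a * (T p b * f (ebas p) a))"
    by (rule sum.swap)
  also have "\<dots> = sharp T (dualmap f \<alpha>) b"
    unfolding sharp_def dualmap_def pair_def by (simp add: sum_distrib_left mult_ac)
  finally show ?thesis .
qed

lemma contract_tmap_right:
  assumes "lin g"
  shows "(\<Sum>a\<in>UNIV. \<alpha> a * tmap id g T a b) = g (sharp T \<alpha>) b"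
proof -
  have "(\<Sum>a\<in>UNIV. \<alpha> a * tmap id g T a b) = (\<Sum>a\<in>UNIV. \<Sum>q\<in>UNIV. \<alpha> a * (T a q * g (ebas q) b))"
    unfolding tmap_right_eq by (simp add: sum_distrib_left)
  also have "\<dots> = (\<Sum>q\<in>UNIV. \<Sum>a\<in>UNIV. \<alpha> a * (T a q * g (ebas q) b))"
    by (rule sum.swap)
  also have "\<dots> = (\<Sum>q\<in>UNIV. sharp T \<alpha> q * g (ebas q) b)"
    unfolding sharp_def sum_distrib_right by (simp add: mult_ac)
  also have "\<dots> = g (sharp T \<alpha>) b"
    by (simp only: lin_eq_sum_ebas[OF assms, of "sharp T \<alpha>"])
  finally show ?thesis .
qed

lemma sharp_dualmap_eq:
  assumes "lin \<phi>" and "tmap \<psi> id r1 = tmap id \<phi> r2"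
  shows "sharp r1 (dualmap \<psi> \<alpha>) = \<phi> (sharp r2 \<alpha>)"
proof
  fix b
  show "sharp r1 (dualmap \<psi> \<alpha>) b = \<phi> (sharp r2 \<alpha>) b"
    using contract_tmap_left[of \<alpha> \<psi> r1 b] contract_tmap_right[OF assms(1), of \<alpha> r2 b] assms(2)
    by simp
qed

lemma map_sharp_eq:
  assumes "lin \<psi>" and "tmap \<psi> id r1 = tmap id \<phi> r2" and "symm r1" and "symm r2"
  shows "\<psi> (sharp r1 \<gamma>) = sharp r2 (dualmap \<phi> \<gamma>)"
proof
  fix a
  have "\<psi> (sharp r1 \<gamma>) a = (\<Sum>b\<in>UNIV. \<gamma> b * tmap id \<psi> r1 b a)"
    using contract_tmap_right[OF assms(1)] by simp
  also have "\<dots> = (\<Sum>b\<in>UNIV. \<gamma> b * tmap \<psi> id r1 a b)"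
    using tmap_swap[OF assms(3)] by simp
  also have "\<dots> = (\<Sum>b\<in>UNIV. \<gamma> b * tmap \<phi> id r2 b a)"
    using assms(2) tmap_swap[OF assms(4)] by simp
  also have "\<dots> = sharp r2 (dualmap \<phi> \<gamma>) a"
    by (rule contract_tmap_left)
  finally show "\<psi> (sharp r1 \<gamma>) a = sharp r2 (dualmap \<phi> \<gamma>) a" .
qed

lemma Lstar_dualmap:
  assumes "lin \<psi>" and "\<forall>x y. \<psi> (pmul c (\<phi> x) y) = pmul c x (\<psi> y)"
  shows "Lstar c (\<phi> u) (dualmap \<psi> \<beta>) = dualmap \<psi> (Lstar c u \<beta>)"
  by (rule vec_eq_pairI)
    (simp add: pair_dualmap[OF assms(1)] pair_dualmap[OF lin_dualmap] assms(2))

lemma dualmap_adstar: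
  assumes "lie_hom_c c \<phi>"
  shows "dualmap \<phi> (adstar c (\<phi> u) \<gamma>) = adstar c u (dualmap \<phi> \<gamma>)"
proof -
  have lin: "lin \<phi>" and hom: "\<And>x y. \<phi> (ad c x y) = ad c (\<phi> x) (\<phi> y)"
    using assms by (auto simp: lie_hom_c_def)
  show ?thesis
    by (rule vec_eq_pairI) (simp add: pair_dualmap[OF lin] hom[symmetric])
qed

lemma dualmap_Rstar_sharp:
  assumes "lin \<psi>" "lin \<phi>" and "tmap \<psi> id r1 = tmap id \<phi> r2" and "symm r1" and "symm r2"
    and "\<forall>x y. \<psi> (pmul c (\<phi> x) y) = pmul c x (\<psi> y)"
  shows "dualmap \<phi> (Rstar c (sharp r1 \<gamma>) (dualmap \<psi> \<alpha>)) = Rstar c (sharp r2 (dualmap \<phi> \<gamma>)) \<alpha>"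
  by (rule vec_eq_pairI)
    (simp add: pair_dualmap[OF assms(1)] pair_dualmap[OF assms(2)] assms(6)
      map_sharp_eq[OF assms(1,3,4,5)])

context
  fixes c :: "'n::finite \<Rightarrow> 'n \<Rightarrow> 'n \<Rightarrow> 'k::field"
    and \<phi> \<psi> :: "('k, 'n) vec \<Rightarrow> ('k, 'n) vec"
    and r1 r2 :: "'n \<Rightarrow> 'n \<Rightarrow> 'k"
  assumes weak_hom: "weak_hom_s c \<phi> \<psi> r2 r1"
    and symm1: "symm r1" and symm2: "symm r2"
begin

lemma weak_hom_s_parts:
  "lie_hom_c c \<phi>" "lin \<phi>" "lin \<psi>" "tmap \<psi> id r1 = tmap id \<phi> r2"
  "\<forall>x y. \<psi> (pmul c (\<phi> x) y) = pmul c x (\<psi> y)" "\<And>x y. \<phi> (ad c x y) = ad c (\<phi> x) (\<phi> y)"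
  using weak_hom by (auto simp: weak_hom_s_def lie_hom_c_def)

lemma rdot_dualmap_right:
  "rdot c r2 \<alpha> (dualmap \<phi> \<gamma>) = dualmap \<phi> (rdot c r1 (dualmap \<psi> \<alpha>) \<gamma>)"
  unfolding rdot_def dualmap_vsub
    sharp_dualmap_eq[OF weak_hom_s_parts(2,4)] dualmap_adstar[OF weak_hom_s_parts(1)]
    dualmap_Rstar_sharp[OF weak_hom_s_parts(3,2,4) symm1 symm2 weak_hom_s_parts(5)] ..

lemma map_LstarD_rdot:
  "\<phi> (LstarD (rdot c r2) \<alpha> y) = LstarD (rdot c r1) (dualmap \<psi> \<alpha>) (\<phi> y)"
proof (rule vec_eq_pairI)
  note pair_dualmap_\<phi> = pair_dualmap[OF weak_hom_s_parts(2)]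
  fix \<gamma>
  have "pair (\<phi> (LstarD (rdot c r2) \<alpha> y)) \<gamma> = pair (dualmap \<phi> \<gamma>) (LstarD (rdot c r2) \<alpha> y)"
    by (metis pair_dualmap_\<phi> pair_commute)
  also have "\<dots> = - pair (dualmap \<phi> (rdot c r1 (dualmap \<psi> \<alpha>) \<gamma>)) y"
    by (simp add: pair_LstarD lin_rdot rdot_dualmap_right)
  also have "\<dots> = pair \<gamma> (LstarD (rdot c r1) (dualmap \<psi> \<alpha>) (\<phi> y))"
    by (simp add: pair_dualmap_\<phi> pair_LstarD lin_rdot)
  finally show "pair (\<phi> (LstarD (rdot c r2) \<alpha> y)) \<gamma> = pair (LstarD (rdot c r1) (dualmap \<psi> \<alpha>) (\<phi> y)) \<gamma>"
    by (simp add: pair_commute)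
qed

lemma dualmap_comm_rdot:
  "dualmap \<psi> (comm (rdot c r2) \<alpha> \<beta>) = comm (rdot c r1) (dualmap \<psi> \<alpha>) (dualmap \<psi> \<beta>)"
  unfolding comm_rdot dualmap_vsub sharp_dualmap_eq[OF weak_hom_s_parts(2,4)]
    Lstar_dualmap[OF weak_hom_s_parts(3,5)] ..

lemma weak_hom_p_rdot: "weak_hom_p c \<phi> \<psi> (rdot c r2) (rdot c r1)"
proof -
  note lin_\<phi> = weak_hom_s_parts(2)
  have "plin (\<lambda>X. (\<phi> (fst X), dualmap \<psi> (snd X)))"
    unfolding plin_def padd_def psc_def
    by (simp add: lin_vadd[OF lin_\<phi>] lin_vsc[OF lin_\<phi>] dualmap_vadd lin_vsc[OF lin_dualmap])
  moreover have "(\<lambda>X. (\<phi> (fst X), dualmap \<psi> (snd X))) (pbr c (rdot c r2) X Y)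
      = pbr c (rdot c r1) (\<phi> (fst X), dualmap \<psi> (snd X)) (\<phi> (fst Y), dualmap \<psi> (snd Y))" for X Y
    unfolding pbr_def
    by (simp add: lin_vadd[OF lin_\<phi>] lin_vsub[OF lin_\<phi>] weak_hom_s_parts(6) map_LstarD_rdot
        dualmap_vadd dualmap_vsub dualmap_comm_rdot Lstar_dualmap[OF weak_hom_s_parts(3,5)])
  ultimately show ?thesis
    unfolding weak_hom_p_def
    using weak_hom_s_parts(1,3) lin_dualmap dualmap_comm_rdot by blast
qed

end

theorem proposition5p10:
  fixes c :: "'n::finite \<Rightarrow> 'n \<Rightarrow> 'n \<Rightarrow> 'k::field_char_0"
    and r \<kappa>1 \<kappa>2 :: "'n \<Rightarrow> 'n \<Rightarrow> 'k"
  assumes "prelie_alg c"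
    and "symm r"
    and "is_smatrix c r"
    and "inf_def_s c r \<kappa>1"
    and "inf_def_s c r \<kappa>2"
    and "equiv_s c r \<kappa>1 \<kappa>2"
  shows "equiv_p c r (\<lambda>\<alpha> \<beta>. vsub (adstar c (sharp \<kappa>1 \<alpha>) \<beta>) (Rstar c (sharp \<kappa>1 \<beta>) \<alpha>))
                     (\<lambda>\<alpha> \<beta>. vsub (adstar c (sharp \<kappa>2 \<alpha>) \<beta>) (Rstar c (sharp \<kappa>2 \<beta>) \<alpha>))"
proof -
  obtain x where hom: "\<And>t. weak_hom_s c (\<lambda>y. vadd y (vsc t (ad c x y))) (\<lambda>y. vsub y (vsc t (pmul c x y)))
      (\<lambda>i j. r i j + t * \<kappa>2 i j) (\<lambda>i j. r i j + t * \<kappa>1 i j)"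
    using assms(6) unfolding equiv_s_def by blast
  have symm_deform: "symm (\<lambda>i j. r i j + t * \<kappa> i j)" if "inf_def_s c r \<kappa>" for \<kappa> t
    using assms(2) that by (simp add: symm_def inf_def_s_def)
  show ?thesis
    unfolding equiv_p_def
    using weak_hom_p_rdot[OF hom symm_deform[OF assms(4)] symm_deform[OF assms(5)]]
    by (auto simp: rdot_deform[symmetric])
qed

end
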